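(* Let $R>0$, let $K\subset\mathbb{R}^2$ be the closed disk of radius $R$ centered at the origin, and let $f\colon\mathbb{R}\to(0,\infty)$ be a continuously differentiable convex function with $t^2+f(t)^2>R^2$ for all $t$; let $L=\{(t,y)\mid f(t)\le y\}$. Put $$\alpha(t)=\frac{tf'(t)-f(t)}{\sqrt{1+f'(t)^2}}.$$ Then for every point $(x,y)$ with $d((x,y),K)=d((x,y),L)$ there is $t\in\mathbb{R}$ with $\alpha(t)<R$ (namely, $(t,f(t))$ is the point of $L$ nearest to $(x,y)$) such that $$x=t+\frac{f'(t)}{2\sqrt{1+f'(t)^2}}\cdot\frac{t^2+f(t)^2-R^2}{R-\alpha(t)},\qquad y=f(t)-\frac{1}{2\sqrt{1+f'(t)^2}}\cdot\frac{t^2+f(t)^2-R^2}{R-\alpha(t)}.$$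
   Context: $d(p,A)=\inf\{|p-q|\mid q\in A\}$ (Euclidean distance). *)

theory Defs
  imports "HOL-Analysis.Analysis"
begin

end

theory Submission
  imports Defs
begin

(* The epigraph L of f is closed, convex and disjoint from the disk K, so a point p
   equidistant from K and L lies outside both. Its nearest point in L lies on the graph,
   q = (t, f t), and p - q is the outward normal there: p = q + \<lambda> (f' t, -1) with \<lambda> > 0.
   Since d(p, K) = |p| - R, equidistance reads |p| = R + \<lambda> sqrt (1 + f' t ^ 2); after
   squaring, this is a linear equation for \<lambda>, whose solution gives the stated formulas. *)

lemma infdist_cball_outside:
  fixes c p :: "'a::real_normed_vector"
  assumes "0 \<le> R" and "R \<le> dist c p"
  shows "infdist p (cball c R) = dist c p - R"
proof (rule antisym)
  define w where "w = c + (R / dist c p) *\<^sub>R (p - c)"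
  have "dist c w \<le> R"
    using assms by (simp add: w_def dist_norm norm_minus_commute)
  moreover have "dist p w = dist c p - R"
  proof (cases "p = c")
    case False
    have "p - w = (1 - R / dist c p) *\<^sub>R (p - c)"
      by (simp add: w_def algebra_simps)
    then have "dist p w = \<bar>1 - R / dist c p\<bar> * dist c p"
      by (simp add: dist_norm norm_minus_commute)
    also have "\<dots> = dist c p - R"
      using assms False by (simp add: abs_of_nonneg field_simps)
    finally show ?thesis .
  qed (use assms in \<open>simp add: w_def\<close>)
  ultimately show "infdist p (cball c R) \<le> dist c p - R"
    by (metis infdist_le mem_cball)
  have "dist c p - R \<le> dist p z" if "z \<in> cball c R" for z
    using that dist_triangle[of c p z] by (simp add: dist_commute)
  then show "dist c p - R \<le> infdist p (cball c R)"
    using assms(1) by (simp add: infdist_notempty cINF_greatest del: mem_cball)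
qed

lemma infdist_eq_imp_notin_Un:
  fixes K L :: "'a::metric_space set"
  assumes "closed K" "closed L" "K \<noteq> {}" "L \<noteq> {}" "K \<inter> L = {}"
    and "infdist p K = infdist p L"
  shows "p \<notin> K \<union> L"
  using assms in_closed_iff_infdist_zero by (metis IntI Un_iff empty_iff)

lemma epigraph_UNIV: "epigraph UNIV f = {(t, s). f t \<le> s}"
  by (auto simp: epigraph_def)

lemma closed_epigraph_UNIV:
  fixes f :: "'a::topological_space \<Rightarrow> 'b::linorder_topology"
  assumes "continuous_on UNIV f"
  shows "closed {(t, s). f t \<le> s}"
proof -
  have "closed {z. f (fst z) \<le> snd z}"
    by (intro closed_Collect_le continuous_on_compose2[OF assms] continuous_on_fst
        continuous_on_snd continuous_on_id) auto
  then show ?thesis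
    by (simp add: case_prod_beta')
qed

lemma epigraph_disjoint_cball:
  fixes f :: "real \<Rightarrow> real"
  assumes "\<And>t. 0 \<le> f t" and "\<And>t. R\<^sup>2 < t\<^sup>2 + (f t)\<^sup>2"
  shows "cball 0 R \<inter> {(t, s). f t \<le> s} = {}"
proof -
  have "R < norm (t, s)" if "f t \<le> s" for t s
  proof -
    have "(f t)\<^sup>2 \<le> s\<^sup>2"
      using that assms(1)[of t] by (simp add: power_mono)
    then have "R\<^sup>2 < (norm (t, s))\<^sup>2"
      using assms(2)[of t] by (simp add: norm_Pair)
    then show ?thesis
      using power2_less_imp_less by fastforce
  qed
  then show ?thesis
    by (auto simp: not_le[symmetric])
qed

lemma closest_point_epigraph:
  fixes f :: "real \<Rightarrow> real"
  assumes convex: "convex_on UNIV f"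
    and deriv: "(f has_real_derivative D) (at a)"
    and outside: "y < f x"
    and closest: "f a \<le> b" "infdist (x, y) {(t, s). f t \<le> s} = dist (x, y) (a, b)"
  shows "b = f a" and "y < f a" and "x = a + (f a - y) * D"
proof -
  define L where "L = {(t, s). f t \<le> s}"
  have "convex L"
    using convex_epigraphI[OF convex] by (simp add: L_def epigraph_UNIV)
  moreover have "closed L"
    unfolding L_def
    by (rule closed_epigraph_UNIV, rule convex_on_continuous) (simp_all add: convex)
  moreover have "(a, b) \<in> L"
    using closest(1) by (simp add: L_def)
  moreover have "\<forall>z\<in>L. dist (x, y) (a, b) \<le> dist (x, y) z"
    using closest(2) infdist_le[of _ L "(x, y)"] by (simp add: L_def)
  ultimately have "inner ((x, y) - (a, b)) (z - (a, b)) \<le> 0" if "z \<in> L" for z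
    using any_closest_point_dot that by blast
  then have dot: "(x - a) * (t - a) + (y - b) * (s - b) \<le> 0" if "f t \<le> s" for t s
    using that by (force simp: L_def inner_Pair)
  have "y \<le> b"
    using dot[of a "b + 1"] closest(1) by simp
  moreover have "y \<noteq> b"
  proof
    assume "y = b"
    then have "x = a"
      using dot[of "a + 1" "f (a + 1)"] dot[of "a - 1" "f (a - 1)"] by simp
    then show False
      using \<open>y = b\<close> closest(1) outside by simp
  qed
  ultimately have "y < b"
    by simp
  then show "b = f a"
    using dot[of a "f a"] closest(1) by (simp add: mult_le_0_iff)
  with \<open>y < b\<close> show "y < f a"
    by simp
  define g where "g h = (x - a) * h + (y - b) * (f (a + h) - b)" for h
  have "(g has_real_derivative (x - a) + (y - b) * D) (at 0)"
    unfolding g_def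
    using DERIV_shift[of f D 0 a] deriv
    by (auto intro!: derivative_eq_intros simp: add.commute)
  then have "(x - a) + (y - b) * D = 0"
  proof (rule DERIV_local_max[of _ _ _ 1])
    show "\<forall>h. \<bar>0 - h\<bar> < 1 \<longrightarrow> g h \<le> g 0"
      using dot[of "a + _" "f (a + _)"] \<open>b = f a\<close> by (simp add: g_def)
  qed simp
  then show "x = a + (f a - y) * D"
    using \<open>b = f a\<close> by (simp add: algebra_simps)
qed

lemma equidistant_point_formula:
  fixes R a c D x y :: real
  defines "s \<equiv> sqrt (1 + D\<^sup>2)"
    and "Q \<equiv> (a\<^sup>2 + c\<^sup>2 - R\<^sup>2) / (R - (a * D - c) / sqrt (1 + D\<^sup>2))"
  assumes foot: "y < c" "x = a + (c - y) * D"
    and outside: "R\<^sup>2 < a\<^sup>2 + c\<^sup>2"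
    and equidist: "norm (x, y) = R + dist (x, y) (a, c)"
  shows "(a * D - c) / s < R \<and> x = a + D / (2 * s) * Q \<and> y = c - 1 / (2 * s) * Q"
proof -
  define lam where "lam = c - y"
  have "lam > 0" "s > 0" "s\<^sup>2 = 1 + D\<^sup>2"
    using foot(1) by (simp_all add: lam_def s_def add_pos_nonneg)
  have "dist (x, y) (a, c) = sqrt ((lam * D)\<^sup>2 + lam\<^sup>2)"
    using foot by (simp add: dist_Pair_Pair dist_real_def lam_def power2_commute)
  also have "\<dots> = sqrt ((lam * s)\<^sup>2)"
    using \<open>s\<^sup>2 = 1 + D\<^sup>2\<close> by (simp add: power_mult_distrib algebra_simps)
  also have "\<dots> = lam * s"
    using \<open>lam > 0\<close> \<open>s > 0\<close> by simp
  finally have "sqrt (x\<^sup>2 + y\<^sup>2) = R + lam * s"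
    using equidist by (simp add: norm_Pair)
  then have "x\<^sup>2 + y\<^sup>2 = (R + lam * s)\<^sup>2"
    by (metis real_sqrt_pow2 add_nonneg_nonneg zero_le_power2)
  then have key: "a\<^sup>2 + c\<^sup>2 - R\<^sup>2 = 2 * lam * (R * s - (a * D - c))"
    using foot(2) lam_def \<open>s\<^sup>2 = 1 + D\<^sup>2\<close> by algebra
  then have "0 < 2 * lam * (R * s - (a * D - c))"
    using outside by linarith
  then have "R * s - (a * D - c) > 0"
    using \<open>lam > 0\<close> by (simp add: zero_less_mult_iff)
  then have "(a * D - c) / s < R" and "Q = 2 * lam * s"
    using \<open>s > 0\<close> by (simp_all add: Q_def key field_simps flip: s_def)
  moreover have "D / (2 * s) * (2 * lam * s) = lam * D" and "1 / (2 * s) * (2 * lam * s) = lam"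
    using \<open>s > 0\<close> by simp_all
  ultimately show ?thesis
    using foot by (simp add: lam_def mult.commute)
qed

theorem theorem5:
  fixes R :: real and f f' :: "real \<Rightarrow> real" and x y :: real
  assumes R_pos: "R > 0"
    and f_pos: "\<And>t. f t > 0"
    and f_deriv: "\<And>t. (f has_real_derivative f' t) (at t)"
    and f'_cont: "continuous_on UNIV f'"
    and f_convex: "convex_on UNIV f"
    and f_outside: "\<And>t. t\<^sup>2 + (f t)\<^sup>2 > R\<^sup>2"
    and equidist: "infdist (x, y) (cball (0::real \<times> real) R) = infdist (x, y) {(t, s). f t \<le> s}"
  shows "\<exists>t. (t * f' t - f t) / sqrt (1 + (f' t)\<^sup>2) < R
           \<and> dist (x, y) (t, f t) = infdist (x, y) {(t, s). f t \<le> s}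
           \<and> x = t + f' t / (2 * sqrt (1 + (f' t)\<^sup>2)) *
                 ((t\<^sup>2 + (f t)\<^sup>2 - R\<^sup>2) / (R - (t * f' t - f t) / sqrt (1 + (f' t)\<^sup>2)))
           \<and> y = f t - 1 / (2 * sqrt (1 + (f' t)\<^sup>2)) *
                 ((t\<^sup>2 + (f t)\<^sup>2 - R\<^sup>2) / (R - (t * f' t - f t) / sqrt (1 + (f' t)\<^sup>2)))"
proof -
  \<comment> \<open>f is continuous by convexity.\<close>
  define L where "L = {(t, s). f t \<le> s}"
  define K where "K = cball (0::real \<times> real) R"
  have "closed L"
    using closed_epigraph_UNIV[OF convex_on_continuous[OF open_UNIV f_convex]] by (simp add: L_def)
  have "L \<noteq> {}"
    by (auto simp: L_def)
  have "(x, y) \<notin> K \<union> L"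
  proof (rule infdist_eq_imp_notin_Un)
    show "closed K" and "K \<noteq> {}"
      using R_pos by (simp_all add: K_def)
    show "K \<inter> L = {}"
      using epigraph_disjoint_cball[of f R] f_pos f_outside by (simp add: K_def L_def less_imp_le)
    show "infdist (x, y) K = infdist (x, y) L"
      using equidist by (simp add: K_def L_def)
  qed fact+
  then have "R \<le> norm (x, y)" and "y < f x"
    by (auto simp: K_def L_def)
  obtain a b where "(a, b) \<in> L" and closest: "infdist (x, y) L = dist (x, y) (a, b)"
    using infdist_attains_inf[OF \<open>closed L\<close> \<open>L \<noteq> {}\<close>, of "(x, y)"] by (metis surj_pair)
  then have foot: "b = f a" "y < f a" "x = a + (f a - y) * f' a"
    using closest_point_epigraph[OF f_convex f_deriv \<open>y < f x\<close>] by (simp_all add: L_def)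
  have "infdist (x, y) K = norm (x, y) - R"
    using infdist_cball_outside[of R 0 "(x, y)"] R_pos \<open>R \<le> norm (x, y)\<close> by (simp add: K_def)
  then have "norm (x, y) = R + dist (x, y) (a, f a)"
    using equidist closest foot(1) by (simp add: K_def L_def)
  then show ?thesis
    using equidistant_point_formula[OF foot(2,3) f_outside] closest foot(1) by (auto simp: L_def)
qed

end
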